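(* Let $\eta>0$, $\beta\in[0,1)$ and $\lambda_i$ with $\eta\lambda_i>0$, and let ${\mathcal{M}}_i:\mathbb{S}^2\to\mathbb{S}^2$, ${\mathcal{M}}_i({\bm{X}}):={\bm{A}}_i{\bm{X}}{\bm{A}}_i^\top+\eta^2\lambda_i^2({\bm{X}})_{11}{\bm{Q}}$, where ${\bm{A}}_i=\begin{bmatrix}1-\eta\lambda_i&-\beta\\ \eta\lambda_i&\beta\end{bmatrix}$ and ${\bm{Q}}=\begin{bmatrix}1&-1\\-1&1\end{bmatrix}$. For any $c>0$, if $\rho(c{\mathcal{M}}_i)\ge1$, then for every $\alpha>0$ there is no ${\bm{W}}\succeq0$ (${\bm{W}}\in\mathbb{S}^2$) with $(\mathrm{Id}-c{\mathcal{M}}_i)({\bm{W}})\succeq\alpha{\bm{Q}}$.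
   Context: $\mathbb{S}^2$ denotes the space of real symmetric $2\times2$ matrices; $\succeq$ is the Loewner order; $\rho(\cdot)$ denotes spectral radius and $\mathrm{Id}$ the identity map. *)

theory Defs
  imports "HOL-Analysis.Analysis"
begin

text \<open>Matrices of the paper, with entries embedded into any real algebra
  (real for the map on S^2, complex for its complexification).\<close>

definition Amat :: "real \<Rightarrow> real \<Rightarrow> real \<Rightarrow> 'a::real_algebra_1^2^2" where
  "Amat eta beta lam =
     vector [vector [of_real (1 - eta*lam), of_real (- beta)],
             vector [of_real (eta*lam), of_real beta]]"

definition Qmat :: "'a::real_algebra_1^2^2" where
  "Qmat = vector [vector [1, -1], vector [-1, 1]]"

definition msc :: "'a::times \<Rightarrow> 'a^'n^'m \<Rightarrow> 'a^'n^'m" where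
  "msc k X = (\<chi> i j. k * X $ i $ j)"

definition Mop :: "real \<Rightarrow> real \<Rightarrow> real \<Rightarrow> 'a::real_algebra_1^2^2 \<Rightarrow> 'a^2^2" where
  "Mop eta beta lam X =
     Amat eta beta lam ** X ** transpose (Amat eta beta lam)
     + msc (of_real (eta^2 * lam^2) * X $ 1 $ 1) Qmat"

definition sym2 :: "('a^2^2) set" where
  "sym2 = {X. transpose X = X}"

text \<open>Spectrum and spectral radius of a linear operator on S^2, computed on
  its complexification (the complex symmetric 2x2 matrices).\<close>
definition spectrum_S2 :: "(complex^2^2 \<Rightarrow> complex^2^2) \<Rightarrow> complex set" where
  "spectrum_S2 L = {z. \<exists>X \<in> sym2. X \<noteq> 0 \<and> L X = msc z X}"

definition spectral_radius_S2 :: "(complex^2^2 \<Rightarrow> complex^2^2) \<Rightarrow> real" where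
  "spectral_radius_S2 L = Sup (cmod ` spectrum_S2 L)"

definition psd2 :: "real^2^2 \<Rightarrow> bool" where
  "psd2 W \<longleftrightarrow> W \<in> sym2 \<and> (\<forall>v. v \<bullet> (W *v v) \<ge> 0)"

definition loewner_ge :: "real^2^2 \<Rightarrow> real^2^2 \<Rightarrow> bool" where
  "loewner_ge X Y \<longleftrightarrow> psd2 (X - Y)"

end

theory Submission
  imports Defs "HOL-Real_Asymp.Real_Asymp"
begin

(* Put L = c M_i; it is linear and positive (it maps positive semidefinite matrices to
   positive semidefinite ones). If W >= 0 and (Id - L) W >= alpha Q, then W' = W + L W
   satisfies (Id - L) W' >= alpha (Q + L Q), and Q + L Q is positive definite; as W' is
   bounded, L W' <= r W' for some r < 1.
   Such a contraction bounds the spectrum of a positive map: if L X = z X for a complex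
   symmetric X \<noteq> 0 with |z| > r, then for q = r / |z| < 1 and every n the real matrices
   Re (u X) lie in the order interval [-t q^n |u| W', t q^n |u| W'], so X = 0.
   Hence rho(L) <= r < 1. *)

definition qform :: "real^'n^'n \<Rightarrow> real^'n \<Rightarrow> real" where
  "qform Y x = x \<bullet> (Y *v x)"

definition psd_form :: "real^'n^'n \<Rightarrow> bool" where
  "psd_form Y \<longleftrightarrow> (\<forall>x. 0 \<le> qform Y x)"

definition positive_map :: "(real^'n^'n \<Rightarrow> real^'m^'m) \<Rightarrow> bool" where
  "positive_map L \<longleftrightarrow> (\<forall>Y. psd_form Y \<longrightarrow> psd_form (L Y))"

lemma qform_add: "qform (X + Y) x = qform X x + qform Y x"
  by (simp add: qform_def matrix_vector_mult_add_rdistrib inner_add_right)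

lemma qform_diff: "qform (X - Y) x = qform X x - qform Y x"
  by (simp add: qform_def matrix_vector_mult_diff_rdistrib inner_diff_right)

lemma qform_scaleR: "qform (c *\<^sub>R Y) x = c * qform Y x"
  by (simp add: qform_def flip: scaleR_matrix_vector_assoc)

lemma qform_bounded: "\<exists>C>0. \<forall>x. \<bar>qform Y x\<bar> \<le> C * (x \<bullet> x)"
proof -
  obtain C where "C > 0" and C: "\<And>x. norm (Y *v x) \<le> norm x * C"
    using bounded_linear.pos_bounded[OF matrix_vector_mul_bounded_linear] by blast
  have "\<bar>qform Y x\<bar> \<le> C * (x \<bullet> x)" for x
  proof -
    have "\<bar>qform Y x\<bar> \<le> norm x * norm (Y *v x)"
      unfolding qform_def by (rule Cauchy_Schwarz_ineq2)
    also have "\<dots> \<le> norm x * (norm x * C)"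
      using C by (simp add: mult_left_mono)
    finally show ?thesis by (simp add: dot_square_norm power2_eq_square algebra_simps)
  qed
  with \<open>C > 0\<close> show ?thesis by blast
qed

lemma inner_transpose_matrix:
  fixes Y :: "real^'n^'m"
  shows "b \<bullet> (Y *v a) = a \<bullet> (transpose Y *v b)"
  by (simp add: inner_commute flip: dot_lmul_matrix)

lemma qform_polarize:
  "qform Y (a + b) = qform Y a + qform Y b + a \<bullet> (Y *v b) + a \<bullet> (transpose Y *v b)"
  by (simp add: qform_def matrix_vector_right_distrib inner_add_left inner_add_right
      inner_transpose_matrix[of b Y a])

lemma symmetric_qform_eq_0:
  assumes "transpose Y = Y" and "\<And>x. qform Y x = 0"
  shows "Y = 0"
proof -
  have "a \<bullet> (Y *v b) = 0" for a b
    using qform_polarize[of Y a b] assms by simp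
  from this[of "axis i 1" "axis j 1" for i j] show ?thesis
    by (simp add: vec_eq_iff matrix_vector_mult_basis inner_axis' column_def)
qed

lemma psd_form_add: "psd_form X \<Longrightarrow> psd_form Y \<Longrightarrow> psd_form (X + Y)"
  by (simp add: psd_form_def qform_add)

lemma positive_map_abs_qform_le:
  assumes "linear L" and "positive_map L" and "\<And>y. \<bar>qform Y y\<bar> \<le> s * qform T y"
  shows "\<bar>qform (L Y) x\<bar> \<le> s * qform (L T) x"
proof -
  have "0 \<le> s * qform T y + qform Y y" and "0 \<le> s * qform T y - qform Y y" for y
    using assms(3)[of y] by (simp_all add: abs_le_iff)
  then have "psd_form (s *\<^sub>R T + Y)" and "psd_form (s *\<^sub>R T - Y)"
    by (simp_all add: psd_form_def qform_add qform_diff qform_scaleR)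
  then have "psd_form (L (s *\<^sub>R T + Y))" and "psd_form (L (s *\<^sub>R T - Y))"
    using assms(2) by (auto simp: positive_map_def)
  then have "0 \<le> s * qform (L T) x + qform (L Y) x" and "0 \<le> s * qform (L T) x - qform (L Y) x"
    using assms(1) by (simp_all add: psd_form_def linear_add linear_diff linear_scale qform_add qform_diff qform_scaleR)
  then show ?thesis by (simp add: abs_le_iff)
qed

definition re_mat :: "complex^'n^'m \<Rightarrow> real^'n^'m" where
  "re_mat X = (\<chi> i j. Re (X $ i $ j))"

(* The two conditions force Lc X = L (Re X) + i L (Im X). *)
definition is_complexification ::
    "(complex^'n^'n \<Rightarrow> complex^'n^'n) \<Rightarrow> (real^'n^'n \<Rightarrow> real^'n^'n) \<Rightarrow> bool" where
  "is_complexification Lc L \<longleftrightarrow>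
     (\<forall>X. re_mat (Lc X) = L (re_mat X)) \<and> (\<forall>u X. Lc (msc u X) = msc u (Lc X))"

lemma msc_msc: "msc u (msc w X) = msc (u * w) (X :: complex^'n^'m)"
  by (simp add: vec_eq_iff msc_def)

lemma re_mat_msc: "re_mat (msc u X) = Re u *\<^sub>R re_mat X + Im u *\<^sub>R re_mat (msc \<i> X)"
  by (simp add: vec_eq_iff re_mat_def msc_def)

lemma qform_re_mat_msc_bounded:
  "\<exists>C\<ge>0. \<forall>u x. \<bar>qform (re_mat (msc u X)) x\<bar> \<le> C * cmod u * (x \<bullet> x)"
proof -
  obtain C1 where "C1 > 0" and C1: "\<And>x. \<bar>qform (re_mat X) x\<bar> \<le> C1 * (x \<bullet> x)"
    using qform_bounded by blast
  obtain C2 where "C2 > 0" and C2: "\<And>x. \<bar>qform (re_mat (msc \<i> X)) x\<bar> \<le> C2 * (x \<bullet> x)"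
    using qform_bounded by blast
  have "\<bar>qform (re_mat (msc u X)) x\<bar> \<le> (C1 + C2) * cmod u * (x \<bullet> x)" for u x
  proof -
    have "qform (re_mat (msc u X)) x = Re u * qform (re_mat X) x + Im u * qform (re_mat (msc \<i> X)) x"
      by (subst re_mat_msc) (simp add: qform_add qform_scaleR)
    then have "\<bar>qform (re_mat (msc u X)) x\<bar>
        \<le> \<bar>Re u\<bar> * \<bar>qform (re_mat X) x\<bar> + \<bar>Im u\<bar> * \<bar>qform (re_mat (msc \<i> X)) x\<bar>"
      by (simp add: abs_mult[symmetric] abs_triangle_ineq)
    also have "\<dots> \<le> cmod u * (C1 * (x \<bullet> x)) + cmod u * (C2 * (x \<bullet> x))"
      by (intro add_mono mult_mono C1 C2 abs_Re_le_cmod abs_Im_le_cmod) auto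
    finally show ?thesis by (simp add: algebra_simps)
  qed
  moreover have "C1 + C2 \<ge> 0" using \<open>C1 > 0\<close> \<open>C2 > 0\<close> by simp
  ultimately show ?thesis by blast
qed

lemma re_mat_msc_eigenvector:
  assumes "is_complexification Lc L" and "Lc X = msc z X"
  shows "L (re_mat (msc u X)) = re_mat (msc (u * z) X)"
proof -
  have "L (re_mat (msc u X)) = re_mat (Lc (msc u X))"
    using assms(1) unfolding is_complexification_def by metis
  also have "\<dots> = re_mat (msc (u * z) X)"
    using assms by (simp add: is_complexification_def msc_msc)
  finally show ?thesis .
qed

lemma qform_re_mat_msc_decay:
  fixes L :: "real^'n^'n \<Rightarrow> real^'n^'n"
  assumes L: "linear L" "positive_map L" "is_complexification Lc L"
    and eig: "Lc X = msc z X" "z \<noteq> 0"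
    and contr: "0 \<le> r" "\<And>x. qform (L T) x \<le> r * qform T x"
    and base: "0 \<le> t" "\<And>u x. \<bar>qform (re_mat (msc u X)) x\<bar> \<le> t * cmod u * qform T x"
  shows "\<bar>qform (re_mat (msc u X)) x\<bar> \<le> t * (r / cmod z) ^ n * cmod u * qform T x"
proof (induction n arbitrary: u x)
  case 0
  show ?case using base(2) by simp
next
  case (Suc n)
  define v where "v = u / z"
  have "\<bar>qform (re_mat (msc u X)) x\<bar> = \<bar>qform (L (re_mat (msc v X))) x\<bar>"
    using re_mat_msc_eigenvector[OF L(3) eig(1)] eig(2) by (simp add: v_def)
  also have "\<dots> \<le> t * (r / cmod z) ^ n * cmod v * qform (L T) x"
    by (rule positive_map_abs_qform_le[OF L(1,2) Suc.IH])
  also have "\<dots> \<le> t * (r / cmod z) ^ n * cmod v * (r * qform T x)"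
    using base(1) contr(1) by (intro mult_left_mono contr(2)) auto
  also have "\<dots> = t * (r / cmod z) ^ Suc n * cmod u * qform T x"
    using eig(2) by (simp add: v_def norm_divide)
  finally show ?case .
qed

lemma spectrum_S2_le_contraction_factor:
  fixes L :: "real^2^2 \<Rightarrow> real^2^2"
  assumes L: "linear L" "positive_map L" "is_complexification Lc L"
    and T: "m > 0" "\<And>x. m * (x \<bullet> x) \<le> qform T x"
    and contr: "0 \<le> r" "\<And>x. qform (L T) x \<le> r * qform T x"
    and z: "z \<in> spectrum_S2 Lc"
  shows "cmod z \<le> r"
proof (rule ccontr)
  assume "\<not> cmod z \<le> r"
  then have "r < cmod z" by simp
  with \<open>0 \<le> r\<close> have "z \<noteq> 0" by auto
  obtain X where "X \<in> sym2" "X \<noteq> 0" and eig: "Lc X = msc z X"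
    using z unfolding spectrum_S2_def by blast
  obtain C where "C \<ge> 0" and C: "\<And>u x. \<bar>qform (re_mat (msc u X)) x\<bar> \<le> C * cmod u * (x \<bullet> x)"
    using qform_re_mat_msc_bounded by blast
  have base: "\<bar>qform (re_mat (msc u X)) x\<bar> \<le> C / m * cmod u * qform T x" for u x
  proof -
    have "\<bar>qform (re_mat (msc u X)) x\<bar> \<le> C / m * cmod u * (m * (x \<bullet> x))"
      using C[of u x] \<open>m > 0\<close> by simp
    also have "\<dots> \<le> C / m * cmod u * qform T x"
      using \<open>C \<ge> 0\<close> \<open>m > 0\<close> by (intro mult_left_mono T(2)) auto
    finally show ?thesis .
  qed
  have "re_mat (msc u X) = 0" for u
  proof (rule symmetric_qform_eq_0)
    show "transpose (re_mat (msc u X)) = re_mat (msc u X)"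
      using \<open>X \<in> sym2\<close> by (simp add: sym2_def vec_eq_iff re_mat_def msc_def transpose_def)
    fix x
    have "(\<lambda>n. C / m * cmod u * qform T x * (r / cmod z) ^ n) \<longlonglongrightarrow> 0"
      using \<open>0 \<le> r\<close> \<open>r < cmod z\<close>
      by (intro tendsto_mult_right_zero LIMSEQ_power_zero) (simp add: divide_less_eq)
    then have "\<bar>qform (re_mat (msc u X)) x\<bar> \<le> 0"
      by (rule LIMSEQ_le_const)
        (use qform_re_mat_msc_decay[OF L eig \<open>z \<noteq> 0\<close> contr _ base] \<open>C \<ge> 0\<close> \<open>m > 0\<close>
          in \<open>auto simp: mult_ac\<close>)
    then show "qform (re_mat (msc u X)) x = 0" by simp
  qed
  from this[of 1] this[of \<i>] have "Re (X $ i $ j) = 0" and "Im (X $ i $ j) = 0" for i j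
    by (simp_all add: re_mat_def msc_def vec_eq_iff)
  then have "X = 0" by (simp add: vec_eq_iff complex_eq_iff)
  with \<open>X \<noteq> 0\<close> show False ..
qed

lemma spectral_radius_S2_less_1:
  fixes L :: "real^2^2 \<Rightarrow> real^2^2"
  assumes L: "linear L" "positive_map L" "is_complexification Lc L"
    and "spectrum_S2 Lc \<noteq> {}"
    and W: "psd_form W" "m > 0" "\<And>x. m * (x \<bullet> x) \<le> qform (W - L W) x"
  shows "spectral_radius_S2 Lc < 1"
proof -
  have "psd_form (L W)" using L(2) W(1) by (simp add: positive_map_def)
  then have W_ge: "m * (x \<bullet> x) \<le> qform W x" for x
    using W(3)[of x] unfolding psd_form_def qform_diff by (smt (verit))
  obtain K where K: "\<And>x. \<bar>qform W x\<bar> \<le> K * (x \<bullet> x)"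
    using qform_bounded by blast
  have "m \<le> K"
    using W_ge[of "axis 1 1"] K[of "axis 1 1"] by (simp add: inner_axis_axis)
  define r where "r = 1 - m / K"
  have "0 \<le> r" "r < 1"
    using \<open>m \<le> K\<close> \<open>m > 0\<close> by (auto simp: r_def)
  have contr: "qform (L W) x \<le> r * qform W x" for x
  proof -
    have "m / K * qform W x \<le> m / K * (K * (x \<bullet> x))"
      using K[of x] \<open>m \<le> K\<close> \<open>m > 0\<close> by (intro mult_left_mono) auto
    also have "\<dots> = m * (x \<bullet> x)" using \<open>m \<le> K\<close> \<open>m > 0\<close> by simp
    finally show ?thesis
      using W(3)[of x] by (simp add: r_def qform_diff algebra_simps)
  qed
  have "cmod z \<le> r" if "z \<in> spectrum_S2 Lc" for z
    using spectrum_S2_le_contraction_factor[OF L \<open>m > 0\<close> W_ge \<open>0 \<le> r\<close> contr that] .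
  then have "spectral_radius_S2 Lc \<le> r"
    unfolding spectral_radius_S2_def using assms(4) by (intro cSup_least) auto
  with \<open>r < 1\<close> show ?thesis by linarith
qed

lemma real_cubic_has_root:
  fixes a b c :: real
  shows "\<exists>z. z^3 + a * z^2 + b * z + c = 0"
proof -
  define g where "g z = z^3 + a * z^2 + b * z + c" for z
  have "eventually (\<lambda>z. g z > 0) at_top" unfolding g_def by real_asymp
  then obtain z1 where z1: "\<And>z. z \<ge> z1 \<Longrightarrow> g z > 0"
    by (auto simp: eventually_at_top_linorder)
  have "eventually (\<lambda>z. g z < 0) at_bot" unfolding g_def by real_asymp
  then obtain z0 where z0: "\<And>z. z \<le> z0 \<Longrightarrow> g z < 0"
    by (auto simp: eventually_at_bot_linorder)
  have "\<exists>z. min z0 z1 \<le> z \<and> z \<le> max z0 z1 \<and> g z = 0"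
    using z0[of "min z0 z1"] z1[of "max z0 z1"]
    by (intro IVT) (auto simp: g_def intro!: continuous_intros)
  then show ?thesis unfolding g_def by blast
qed

lemma real_matrix3_has_eigenvector:
  fixes N :: "real^3^3"
  shows "\<exists>z v. v \<noteq> 0 \<and> N *v v = z *s v"
proof -
  define a where "a = - (N$1$1 + N$2$2 + N$3$3)"
  define b where "b = N$1$1*N$2$2 - N$1$2*N$2$1 + N$1$1*N$3$3 - N$1$3*N$3$1
                      + N$2$2*N$3$3 - N$2$3*N$3$2"
  have mat_entry: "mat z $ i $ j = (if i = j then z else 0)" for i j and z :: real
    by (simp add: mat_def)
  have char_poly: "det (N - mat z) = - (z^3 + a * z^2 + b * z - det N)" for z
    unfolding det_3[of "N - mat z"] det_3[of N] a_def b_def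
    by (simp add: mat_entry power2_eq_square power3_eq_cube algebra_simps)
  obtain z where "z^3 + a * z^2 + b * z - det N = 0"
    using real_cubic_has_root[of a b "- det N"] by auto
  then have "\<not> invertible (N - mat z)"
    by (simp add: invertible_det_nz char_poly)
  then obtain v where "v \<noteq> 0" and "(N - mat z) *v v = 0"
    by (auto simp: invertible_left_inverse matrix_left_invertible_ker)
  moreover have "mat z *v v = z *s v"
    by (simp add: vec_eq_iff matrix_vector_mult_def mat_entry sum_3 forall_3)
  ultimately show ?thesis
    by (metis eq_iff_diff_eq_0 matrix_vector_mult_diff_rdistrib)
qed

lemma Mop_entries:
  fixes Y :: "'a::{real_algebra_1,comm_ring_1}^2^2" and eta beta lam :: real
  defines "h \<equiv> eta * lam"
  shows "Mop eta beta lam Y $1$1 = of_real ((1-h)^2 + h^2) * Y$1$1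
           - of_real ((1-h)*beta) * (Y$1$2 + Y$2$1) + of_real (beta^2) * Y$2$2"
    and "Mop eta beta lam Y $1$2 = of_real ((1-h)*h - h^2) * Y$1$1 + of_real ((1-h)*beta) * Y$1$2
           - of_real (beta*h) * Y$2$1 - of_real (beta^2) * Y$2$2"
    and "Mop eta beta lam Y $2$1 = of_real ((1-h)*h - h^2) * Y$1$1 + of_real ((1-h)*beta) * Y$2$1
           - of_real (beta*h) * Y$1$2 - of_real (beta^2) * Y$2$2"
    and "Mop eta beta lam Y $2$2 = of_real (h^2 + h^2) * Y$1$1
           + of_real (h*beta) * (Y$1$2 + Y$2$1) + of_real (beta^2) * Y$2$2"
  unfolding Mop_def Amat_def Qmat_def msc_def h_def
  by (simp_all add: matrix_matrix_mult_def transpose_def sum_2 algebra_simps power2_eq_square)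

lemma qform_2x2:
  fixes Y :: "real^2^2"
  shows "qform Y x = Y$1$1 * x$1^2 + (Y$1$2 + Y$2$1) * (x$1 * x$2) + Y$2$2 * x$2^2"
  by (simp add: qform_def inner_vec_def matrix_vector_mult_def sum_2 power2_eq_square algebra_simps)

lemma qform_Mop:
  "qform (Mop eta beta lam Y) x
     = qform Y (transpose (Amat eta beta lam) *v x) + (eta * lam)^2 * Y$1$1 * (x$1 - x$2)^2"
  by (simp add: qform_2x2 Mop_entries Amat_def transpose_def matrix_vector_mult_def sum_2
      power2_eq_square algebra_simps)

lemma linear_Mop: "linear (Mop eta beta lam :: real^2^2 \<Rightarrow> real^2^2)"
  by (rule linearI) (simp_all add: vec_eq_iff forall_2 Mop_entries algebra_simps)

lemma positive_map_Mop: "positive_map (Mop eta beta lam)"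
  unfolding positive_map_def psd_form_def
proof (intro allI impI)
  fix Y :: "real^2^2" and x
  assume psd: "\<forall>x. 0 \<le> qform Y x"
  then have "0 \<le> Y$1$1"
    using psd[rule_format, of "vector [1, 0]"] by (simp add: qform_2x2)
  with psd show "0 \<le> qform (Mop eta beta lam Y) x"
    by (simp add: qform_Mop)
qed

lemma positive_map_scaleR: "0 \<le> c \<Longrightarrow> positive_map L \<Longrightarrow> positive_map (\<lambda>Y. c *\<^sub>R L Y)"
  by (simp add: positive_map_def psd_form_def qform_scaleR)

lemma is_complexification_msc_Mop:
  "is_complexification (\<lambda>X. msc (complex_of_real c) (Mop eta beta lam X)) (\<lambda>Y. c *\<^sub>R Mop eta beta lam Y)"
  by (simp add: is_complexification_def vec_eq_iff forall_2 re_mat_def msc_def Mop_entries algebra_simps)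

lemma spectrum_S2_msc_Mop_nonempty: "spectrum_S2 (\<lambda>X. msc w (Mop eta beta lam X)) \<noteq> {}"
proof -
  define h where "h = eta * lam"
  \<comment> \<open>N is the matrix of Mop on symmetric matrices in the coordinates (X11, X12 = X21, X22).\<close>
  define N :: "real^3^3" where
    "N = vector [vector [(1-h)^2 + h^2, - 2 * (1-h) * beta, beta^2],
                 vector [(1-h) * h - h^2, (1 - 2*h) * beta, -(beta^2)],
                 vector [2 * h^2, 2 * h * beta, beta^2]]"
  obtain z y where "y \<noteq> 0" and eig: "N *v y = z *s y"
    using real_matrix3_has_eigenvector by blast
  define X :: "complex^2^2" where
    "X = vector [vector [of_real (y$1), of_real (y$2)], vector [of_real (y$2), of_real (y$3)]]"
  have "X \<in> sym2"
    by (simp add: sym2_def X_def vec_eq_iff forall_2 transpose_def)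
  moreover have "X \<noteq> 0"
    using \<open>y \<noteq> 0\<close> by (auto simp: X_def vec_eq_iff forall_2 forall_3)
  moreover have "Mop eta beta lam X = msc (of_real z) X"
    using eig by (simp add: vec_eq_iff forall_2 forall_3 N_def X_def h_def msc_def Mop_entries
        matrix_vector_mult_def sum_3 complex_eq_iff algebra_simps power2_eq_square)
  ultimately have "w * of_real z \<in> spectrum_S2 (\<lambda>X. msc w (Mop eta beta lam X))"
    unfolding spectrum_S2_def by (auto simp: msc_msc)
  then show ?thesis by blast
qed

lemma sum_squares_le_diff_comb_squares:
  fixes p q c x1 x2 :: real
  assumes "p + q = 1" and "c > 0"
  shows "min 1 c * (x1^2 + x2^2) \<le> (2 * p^2 + 2 * q^2 + 4) * ((x1 - x2)^2 + c * (p * x1 + q * x2)^2)"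
proof -
  define t where "t = x1 - x2"
  define y where "y = p * x1 + q * x2"
  define K where "K = 2 * p^2 + 2 * q^2 + 4"
  have x: "x1 = y + q * t" "x2 = y - p * t"
    using assms(1) by (simp_all add: t_def y_def algebra_simps flip: distrib_right)
  have "(y + q * t)^2 \<le> 2 * y^2 + 2 * q^2 * t^2"
    using zero_le_square[of "y - q * t"] by (simp add: power2_eq_square algebra_simps)
  moreover have "(y - p * t)^2 \<le> 2 * y^2 + 2 * p^2 * t^2"
    using zero_le_square[of "y + p * t"] by (simp add: power2_eq_square algebra_simps)
  moreover have "K * (t^2 + y^2)
      = (2 * y^2 + 2 * q^2 * t^2) + (2 * y^2 + 2 * p^2 * t^2) + 2 * (p * y)^2 + 2 * (q * y)^2 + 4 * t^2"
    by (simp add: K_def power2_eq_square algebra_simps)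
  moreover have "0 \<le> 2 * (p * y)^2 + 2 * (q * y)^2 + 4 * t^2" by simp
  ultimately have "x1^2 + x2^2 \<le> K * (t^2 + y^2)" unfolding x by linarith
  then have "min 1 c * (x1^2 + x2^2) \<le> min 1 c * (K * (t^2 + y^2))"
    using \<open>c > 0\<close> by (intro mult_left_mono) auto
  also have "\<dots> = K * (min 1 c * t^2 + min 1 c * y^2)"
    by (simp add: algebra_simps)
  also have "\<dots> \<le> K * (t^2 + c * y^2)"
    using mult_right_mono[of "min 1 c" 1 "t^2"] mult_right_mono[of "min 1 c" c "y^2"]
    unfolding K_def by (intro mult_left_mono add_mono) auto
  finally show ?thesis by (simp add: K_def t_def y_def)
qed

lemma inner_real2: "x \<bullet> x = x$1^2 + x$2^2" for x :: "real^2"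
  by (simp add: inner_vec_def sum_2 power2_eq_square)

lemma qform_Qmat: "qform Qmat x = (x$1 - x$2)^2"
  by (simp add: qform_2x2 Qmat_def power2_eq_square algebra_simps)

lemma qform_Mop_Qmat_ge:
  "((1 - eta * lam + beta) * x$1 + (eta * lam - beta) * x$2)^2 \<le> qform (Mop eta beta lam Qmat) x"
  by (simp add: qform_Mop qform_Qmat Amat_def transpose_def matrix_vector_mult_def sum_2 algebra_simps)
    (simp add: Qmat_def)

lemma Qmat_plus_Mop_Qmat_positive_definite:
  assumes "c > 0"
  shows "\<exists>\<mu>>0. \<forall>x. \<mu> * (x \<bullet> x) \<le> qform (Qmat + c *\<^sub>R Mop eta beta lam Qmat) x"
proof -
  define p where "p = 1 - eta * lam + beta"
  define q where "q = eta * lam - beta"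
  define K where "K = 2 * p^2 + 2 * q^2 + 4"
  have "K > 0" unfolding K_def by (intro add_nonneg_pos) auto
  have "min 1 c / K * (x \<bullet> x) \<le> qform (Qmat + c *\<^sub>R Mop eta beta lam Qmat) x" for x
  proof -
    have "min 1 c * (x \<bullet> x) \<le> K * ((x$1 - x$2)^2 + c * (p * x$1 + q * x$2)^2)"
      unfolding inner_real2 K_def by (rule sum_squares_le_diff_comb_squares) (use assms in \<open>simp_all add: p_def q_def\<close>)
    also have "\<dots> \<le> K * qform (Qmat + c *\<^sub>R Mop eta beta lam Qmat) x"
      using qform_Mop_Qmat_ge[of eta lam beta x] assms \<open>K > 0\<close>
      by (simp add: qform_add qform_scaleR qform_Qmat p_def q_def)
    finally show ?thesis using \<open>K > 0\<close> by (simp add: field_simps)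
  qed
  moreover have "min 1 c / K > 0" using assms \<open>K > 0\<close> by simp
  ultimately show ?thesis by blast
qed

lemma coercive_Id_minus_map_Id_plus:
  fixes L :: "real^'n^'n \<Rightarrow> real^'n^'n"
  assumes "linear L" and "positive_map L" and "psd_form (W - L W - alpha *\<^sub>R P)"
    and "0 \<le> alpha" and "\<And>x. \<mu> * (x \<bullet> x) \<le> qform (P + L P) x"
  shows "alpha * \<mu> * (x \<bullet> x) \<le> qform ((W + L W) - L (W + L W)) x"
proof -
  define D where "D = W - L W - alpha *\<^sub>R P"
  have "(W + L W) - L (W + L W) = D + L D + alpha *\<^sub>R (P + L P)"
    using assms(1) by (simp add: D_def linear_add linear_diff linear_scale algebra_simps)
  moreover have "0 \<le> qform D x" and "0 \<le> qform (L D) x"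
    using assms(2,3) by (simp_all add: D_def positive_map_def psd_form_def)
  moreover have "alpha * \<mu> * (x \<bullet> x) \<le> alpha * qform (P + L P) x"
    using assms(4,5) by (simp add: mult_left_mono mult.assoc)
  ultimately show ?thesis by (simp add: qform_add qform_scaleR)
qed

theorem lemmaA4:
  fixes eta beta lam c :: real
  assumes "eta > 0" and "0 \<le> beta" and "beta < 1" and "eta * lam > 0"
    and "c > 0"
    and "spectral_radius_S2 (\<lambda>X. msc (complex_of_real c) (Mop eta beta lam X)) \<ge> 1"
  shows "\<forall>alpha::real. alpha > 0 \<longrightarrow>
           \<not> (\<exists>W::real^2^2. W \<in> sym2 \<and> psd2 W \<and>
                loewner_ge (W - c *\<^sub>R Mop eta beta lam W) (alpha *\<^sub>R Qmat))"
proof (intro allI impI notI)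
  fix alpha :: real
  define L where "L Y = c *\<^sub>R Mop eta beta lam Y" for Y :: "real^2^2"
  assume "alpha > 0" and "\<exists>W::real^2^2. W \<in> sym2 \<and> psd2 W \<and>
    loewner_ge (W - c *\<^sub>R Mop eta beta lam W) (alpha *\<^sub>R Qmat)"
  then obtain W where "psd_form W" and "psd_form (W - L W - alpha *\<^sub>R Qmat)"
    by (auto simp: L_def psd2_def loewner_ge_def psd_form_def qform_def)
  have L: "linear L" "positive_map L"
    "is_complexification (\<lambda>X. msc (complex_of_real c) (Mop eta beta lam X)) L"
    using \<open>c > 0\<close> unfolding L_def
    by (auto intro: linear_Mop positive_map_scaleR positive_map_Mop is_complexification_msc_Mop
        real_vector.module_hom_scale)
  obtain \<mu> where "\<mu> > 0" and \<mu>: "\<And>x. \<mu> * (x \<bullet> x) \<le> qform (Qmat + L Qmat) x"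
    using Qmat_plus_Mop_Qmat_positive_definite[OF \<open>c > 0\<close>] unfolding L_def by blast
  define W' where "W' = W + L W"
  have "psd_form W'"
    using \<open>psd_form W\<close> L(2) by (simp add: W'_def psd_form_add positive_map_def)
  have "alpha * \<mu> * (x \<bullet> x) \<le> qform (W' - L W') x" for x
    unfolding W'_def using \<open>alpha > 0\<close>
    by (intro coercive_Id_minus_map_Id_plus[OF L(1,2) \<open>psd_form (W - L W - _)\<close> _ \<mu>]) simp
  moreover have "alpha * \<mu> > 0" using \<open>alpha > 0\<close> \<open>\<mu> > 0\<close> by simp
  ultimately have "spectral_radius_S2 (\<lambda>X. msc (complex_of_real c) (Mop eta beta lam X)) < 1"
    using spectral_radius_S2_less_1[OF L spectrum_S2_msc_Mop_nonempty \<open>psd_form W'\<close>] by blast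
  with assms(6) show False by linarith
qed

end
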